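(* Let $\mathbb{F}$ be a field and let $n>4$ be an integer. Then for each $p\in\{2,\ldots,n-3\}$ and each non-negative integer $q\le p$ there exists a unital $\mathbb{F}$-algebra $\mathcal{A}$ with $\dim\mathcal{A}=n$ and $l(\mathcal{A})=2^{p}+2^{q}$.
   Context: All algebras are finite-dimensional, unital, not necessarily associative algebras over the field $\mathbb{F}$. For a finite generating set $S$ of an algebra $\mathcal{A}$, a word in $S$ is any product (with any bracketing) of finitely many elements of $S$; its length is the number of factors, and $1$ is a word of length $0$. $L_i(S)$ is the linear span of all words in $S$ of length at most $i$. The length of $S$ is $l(S)=\min\{k\ge0: L_k(S)=\mathcal{A}\}$, and $l(\mathcal{A})=\max\{l(S): S\text{ a finite generating set of }\mathcal{A}\}$. *)

theory Defs
  imports Main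
begin

text \<open>An n-dimensional (not necessarily associative) algebra over a field 'a is
modelled on the coordinate space {v :: nat => 'a. v i = 0 for i >= n}, with a
bilinear multiplication given by structure constants c i j k
(e_i * e_j = sum_k c i j k e_k). Every n-dimensional algebra is isomorphic to one
of this form.\<close>

definition vecs :: "nat \<Rightarrow> (nat \<Rightarrow> 'a::field) set" where
  "vecs n = {v. \<forall>i\<ge>n. v i = 0}"

definition sc_mult :: "nat \<Rightarrow> (nat \<Rightarrow> nat \<Rightarrow> nat \<Rightarrow> 'a::field)
    \<Rightarrow> (nat \<Rightarrow> 'a) \<Rightarrow> (nat \<Rightarrow> 'a) \<Rightarrow> (nat \<Rightarrow> 'a)" where
  "sc_mult n c x y = (\<lambda>k. if k < n then (\<Sum>i<n. \<Sum>j<n. c i j k * x i * y j) else 0)"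

definition lin_span :: "(nat \<Rightarrow> 'a::field) set \<Rightarrow> (nat \<Rightarrow> 'a) set" where
  "lin_span W = {x. \<exists>T c. finite T \<and> T \<subseteq> W \<and> x = (\<lambda>k. \<Sum>w\<in>T. c w * w k)}"

inductive is_word :: "('b \<Rightarrow> 'b \<Rightarrow> 'b) \<Rightarrow> 'b \<Rightarrow> 'b set \<Rightarrow> 'b \<Rightarrow> nat \<Rightarrow> bool"
  for mult :: "'b \<Rightarrow> 'b \<Rightarrow> 'b" and one :: 'b and S :: "'b set" where
  word_one: "is_word mult one S one 0"
| word_gen: "s \<in> S \<Longrightarrow> is_word mult one S s 1"
| word_mult: "is_word mult one S a i \<Longrightarrow> is_word mult one S b j \<Longrightarrow> 1 \<le> i \<Longrightarrow> 1 \<le> j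
     \<Longrightarrow> is_word mult one S (mult a b) (i + j)"

definition L_words :: "nat \<Rightarrow> (nat \<Rightarrow> nat \<Rightarrow> nat \<Rightarrow> 'a::field) \<Rightarrow> (nat \<Rightarrow> 'a)
    \<Rightarrow> (nat \<Rightarrow> 'a) set \<Rightarrow> nat \<Rightarrow> (nat \<Rightarrow> 'a) set" where
  "L_words n c e S i = lin_span {w. \<exists>k\<le>i. is_word (sc_mult n c) e S w k}"

definition generating_set :: "nat \<Rightarrow> (nat \<Rightarrow> nat \<Rightarrow> nat \<Rightarrow> 'a::field) \<Rightarrow> (nat \<Rightarrow> 'a)
    \<Rightarrow> (nat \<Rightarrow> 'a) set \<Rightarrow> bool" where
  "generating_set n c e S \<longleftrightarrow> finite S \<and> S \<subseteq> vecs n \<and>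
     lin_span {w. \<exists>k. is_word (sc_mult n c) e S w k} = vecs n"

definition set_length :: "nat \<Rightarrow> (nat \<Rightarrow> nat \<Rightarrow> nat \<Rightarrow> 'a::field) \<Rightarrow> (nat \<Rightarrow> 'a)
    \<Rightarrow> (nat \<Rightarrow> 'a) set \<Rightarrow> nat" where
  "set_length n c e S = (LEAST k. L_words n c e S k = vecs n)"

definition algebra_length_is :: "nat \<Rightarrow> (nat \<Rightarrow> nat \<Rightarrow> nat \<Rightarrow> 'a::field) \<Rightarrow> (nat \<Rightarrow> 'a)
    \<Rightarrow> nat \<Rightarrow> bool" where
  "algebra_length_is n c e m \<longleftrightarrow>
     (\<exists>S. generating_set n c e S \<and> set_length n c e S = m) \<and>
     (\<forall>S. generating_set n c e S \<longrightarrow> set_length n c e S \<le> m)"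

definition is_unit :: "nat \<Rightarrow> (nat \<Rightarrow> nat \<Rightarrow> nat \<Rightarrow> 'a::field) \<Rightarrow> (nat \<Rightarrow> 'a) \<Rightarrow> bool" where
  "is_unit n c e \<longleftrightarrow> e \<in> vecs n \<and>
     (\<forall>x\<in>vecs n. sc_mult n c e x = x \<and> sc_mult n c x e = x)"

end

theory Submission
  imports Defs HOL.Modules "HOL-Library.Function_Algebras"
begin

text \<open>
  Take the basis e_0, ..., e_{n-1} with unit e_0, e_i e_i = e_{i+1} for 1 \<le> i \<le> p,
  e_{q+1} e_{p+1} = e_{p+2}, and all other products of e_1, ..., e_{n-1} zero (chain_alg).
  Give e_t the weight 2^(t-1) for 1 \<le> t \<le> p + 1, 2^p + 2^q for t = p + 2 and 1 beyond
  (chain_weight); a nonzero product of two basis vectors has the sum of their weights.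

  Subtracting multiples of the unit from the generators does not change the spaces L_k,
  so we may assume that the generators have no e_0-component. Then every word of length k
  has vanishing e_t-coordinate whenever the weight of e_t is less than k; as no weight
  exceeds 2^p + 2^q, longer words vanish and every generating set has length at most
  2^p + 2^q. For the generators e_1, e_{p+3}, ..., e_{n-1} (chain_gens) every word is 0 or
  a basis vector of length equal to its weight, so e_{p+2} first appears in L_{2^p+2^q}.
\<close>

interpretation cvec: module "\<lambda>a (x :: nat \<Rightarrow> 'a::field) k. a * x k"
  by unfold_locales (simp_all add: fun_eq_iff algebra_simps)

lemma sum_fun_apply: "(\<Sum>a\<in>A. f a) x = (\<Sum>a\<in>A. f a x)"
  by (induction A rule: infinite_finite_induct) auto

lemma lin_span_eq_span: "lin_span W = cvec.span W"
  unfolding lin_span_def cvec.span_explicit by (auto simp: fun_eq_iff sum_fun_apply)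

lemma subspace_vecs: "cvec.subspace (vecs n)"
  by (auto simp: cvec.subspace_def vecs_def)

definition basis_vec :: "nat \<Rightarrow> nat \<Rightarrow> 'a::field" where
  "basis_vec t = (\<lambda>k. if k = t then 1 else 0)"

lemma basis_vec_in_vecs: "t < n \<Longrightarrow> basis_vec t \<in> vecs n"
  by (auto simp: basis_vec_def vecs_def)

lemma vecs_eq_span_basis_vec: "vecs n = cvec.span (basis_vec ` {..<n})"
proof
  show "cvec.span (basis_vec ` {..<n}) \<subseteq> vecs n"
    by (rule cvec.span_minimal) (auto simp: subspace_vecs basis_vec_in_vecs)
  show "vecs n \<subseteq> cvec.span (basis_vec ` {..<n})"
  proof
    fix x assume x: "x \<in> vecs n"
    have "x t * basis_vec t k = (if t = k then x k else 0)" for t k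
      by (simp add: basis_vec_def)
    then have "(\<Sum>t<n. x t * basis_vec t k) = x k" for k
      using x by (simp add: vecs_def)
    then have "x = (\<Sum>t<n. (\<lambda>k. x t * basis_vec t k))"
      by (simp add: fun_eq_iff sum_fun_apply)
    also have "\<dots> \<in> cvec.span (basis_vec ` {..<n})"
      by (intro cvec.span_sum cvec.span_scale cvec.span_base) auto
    finally show "x \<in> cvec.span (basis_vec ` {..<n})" .
  qed
qed

lemma sum_sum_delta:
  "(\<Sum>i<n. \<Sum>j<n. of_bool (i = a \<and> j = b \<and> R) * x i * y j) =
     (if a < n \<and> b < (n::nat) \<and> R then x a * (y b :: 'a::field) else 0)"
proof -
  have "of_bool (i = a \<and> j = b \<and> R) * x i * y j =
      (if j = b then if i = a \<and> R then x a * y b else 0 else 0)" for i j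
    by simp
  then show ?thesis by (cases "b < n"; cases R) simp_all
qed

lemma sc_mult_eq_0_outside: "\<not> k < n \<Longrightarrow> sc_mult n c x y k = 0"
  by (simp add: sc_mult_def)

lemma sc_mult_linear_left:
  "sc_mult n c 0 y = 0"
  "sc_mult n c (x + x') y = sc_mult n c x y + sc_mult n c x' y"
  "sc_mult n c (\<lambda>k. a * x k) y = (\<lambda>k. a * sc_mult n c x y k)"
  by (auto simp: fun_eq_iff sc_mult_def algebra_simps sum.distrib sum_distrib_left)

lemma sc_mult_linear_right:
  "sc_mult n c x 0 = 0"
  "sc_mult n c x (y + y') = sc_mult n c x y + sc_mult n c x y'"
  "sc_mult n c x (\<lambda>k. a * y k) = (\<lambda>k. a * sc_mult n c x y k)"
  by (auto simp: fun_eq_iff sc_mult_def algebra_simps sum.distrib sum_distrib_left)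

lemma sc_mult_span_closed:
  assumes P: "cvec.subspace P" and AB: "\<And>a b. a \<in> A \<Longrightarrow> b \<in> B \<Longrightarrow> sc_mult n c a b \<in> P"
    and x: "x \<in> cvec.span A" and y: "y \<in> cvec.span B"
  shows "sc_mult n c x y \<in> P"
proof -
  have Ay: "sc_mult n c a y \<in> P" if "a \<in> A" for a
    using y by (induction rule: cvec.span_induct)
      (use P AB that in \<open>auto simp: cvec.subspace_def sc_mult_linear_right\<close>)
  from x show ?thesis
    by (induction rule: cvec.span_induct)
      (use P Ay in \<open>auto simp: cvec.subspace_def sc_mult_linear_left\<close>)
qed

lemma is_word_in_vecs:
  "is_word (sc_mult n c) e S w k \<Longrightarrow> e \<in> vecs n \<Longrightarrow> S \<subseteq> vecs n \<Longrightarrow> w \<in> vecs n"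
  by (induction rule: is_word.induct) (auto simp: vecs_def sc_mult_def)

lemma is_word_0D: "is_word mult e S w 0 \<Longrightarrow> w = e"
  by (erule is_word.cases) auto

lemma L_words_eq_span: "L_words n c e S i = cvec.span {w. \<exists>k\<le>i. is_word (sc_mult n c) e S w k}"
  by (simp add: L_words_def lin_span_eq_span)

lemma L_words_mono: "i \<le> j \<Longrightarrow> L_words n c e S i \<subseteq> L_words n c e S j"
  unfolding L_words_eq_span by (rule cvec.span_mono) (auto intro: le_trans)

lemma is_word_in_L_words: "is_word (sc_mult n c) e S w k \<Longrightarrow> k \<le> i \<Longrightarrow> w \<in> L_words n c e S i"
  unfolding L_words_eq_span by (rule cvec.span_base) auto

lemma L_words_subset_vecs: "e \<in> vecs n \<Longrightarrow> S \<subseteq> vecs n \<Longrightarrow> L_words n c e S i \<subseteq> vecs n"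
  unfolding L_words_eq_span by (rule cvec.span_minimal) (auto intro: subspace_vecs is_word_in_vecs)

lemma L_words_mult:
  assumes unit: "is_unit n c e" and S: "S \<subseteq> vecs n"
    and x: "x \<in> L_words n c e S i" and y: "y \<in> L_words n c e S j"
  shows "sc_mult n c x y \<in> L_words n c e S (i + j)"
proof (rule sc_mult_span_closed[OF _ _ x[unfolded L_words_eq_span] y[unfolded L_words_eq_span]])
  show "cvec.subspace (L_words n c e S (i + j))"
    by (simp add: L_words_eq_span)
  fix a b
  assume "a \<in> {w. \<exists>k\<le>i. is_word (sc_mult n c) e S w k}" "b \<in> {w. \<exists>k\<le>j. is_word (sc_mult n c) e S w k}"
  then obtain i' j' where a: "is_word (sc_mult n c) e S a i'" "i' \<le> i"
    and b: "is_word (sc_mult n c) e S b j'" "j' \<le> j" by auto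
  have e: "e \<in> vecs n" and e_mult: "\<And>x. x \<in> vecs n \<Longrightarrow> sc_mult n c e x = x \<and> sc_mult n c x e = x"
    using unit by (auto simp: is_unit_def)
  consider "i' = 0" | "j' = 0" | "1 \<le> i'" "1 \<le> j'" by linarith
  then show "sc_mult n c a b \<in> L_words n c e S (i + j)"
  proof cases
    case 1
    then have "a = e" using a(1) by (simp add: is_word_0D)
    then have "sc_mult n c a b = b" using e_mult is_word_in_vecs[OF b(1) e S] by simp
    then show ?thesis using b by (auto intro: is_word_in_L_words)
  next
    case 2
    then have "b = e" using b(1) by (simp add: is_word_0D)
    then have "sc_mult n c a b = a" using e_mult is_word_in_vecs[OF a(1) e S] by simp
    then show ?thesis using a by (auto intro: is_word_in_L_words)
  next
    case 3
    then have "is_word (sc_mult n c) e S (sc_mult n c a b) (i' + j')"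
      using is_word.word_mult[OF a(1) b(1)] by simp
    then show ?thesis using a(2) b(2) by (simp add: is_word_in_L_words)
  qed
qed

lemma L_words_unit_shift:
  assumes unit: "is_unit n c e" and S: "S \<subseteq> vecs n"
    and T: "\<And>t. t \<in> T \<Longrightarrow> \<exists>s\<in>S. \<exists>\<alpha>. t = s + (\<lambda>k. \<alpha> * e k)"
  shows "L_words n c e T i \<subseteq> L_words n c e S i"
proof -
  have "w \<in> L_words n c e S k" if "is_word (sc_mult n c) e T w k" for w k
    using that
  proof induction
    case word_one
    show ?case by (rule is_word_in_L_words[OF is_word.word_one]) simp
  next
    case (word_gen t)
    then obtain s \<alpha> where "s \<in> S" and t: "t = s + (\<lambda>k. \<alpha> * e k)" using T by blast
    then have "s \<in> L_words n c e S 1" "e \<in> L_words n c e S 1"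
      by (auto intro: is_word_in_L_words is_word.intros)
    then show ?case
      unfolding t L_words_eq_span by (intro cvec.span_add cvec.span_scale)
  next
    case (word_mult a i b j)
    then show ?case using L_words_mult[OF unit S] by blast
  qed
  then have "w \<in> L_words n c e S i" if "is_word (sc_mult n c) e T w k" "k \<le> i" for w k
    using that L_words_mono by blast
  then show ?thesis
    unfolding L_words_eq_span[of n c e T] by (intro cvec.span_minimal) (auto simp: L_words_eq_span)
qed

lemma L_words_subset_if_long_words_vanish:
  assumes vanish: "\<And>w k. is_word (sc_mult n c) e S w k \<Longrightarrow> m < k \<Longrightarrow> w = 0"
  shows "L_words n c e S k \<subseteq> L_words n c e S m"
  unfolding L_words_eq_span[of n c e S k]
proof (rule cvec.span_minimal)
  show "{w. \<exists>k'\<le>k. is_word (sc_mult n c) e S w k'} \<subseteq> L_words n c e S m"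
  proof clarify
    fix w k' assume w: "is_word (sc_mult n c) e S w k'"
    show "w \<in> L_words n c e S m"
    proof (cases "k' \<le> m")
      case True
      then show ?thesis by (rule is_word_in_L_words[OF w])
    next
      case False
      then show ?thesis using vanish[OF w] by (simp add: L_words_eq_span cvec.span_zero)
    qed
  qed
qed (simp add: L_words_eq_span)

lemma generating_setI:
  assumes "finite S" and S: "S \<subseteq> vecs n" and e: "e \<in> vecs n" and L: "L_words n c e S k = vecs n"
  shows "generating_set n c e S"
proof -
  let ?W = "{w. \<exists>k. is_word (sc_mult n c) e S w k}"
  have "lin_span ?W \<subseteq> vecs n"
    unfolding lin_span_eq_span by (rule cvec.span_minimal) (auto intro: subspace_vecs is_word_in_vecs[OF _ e S])
  moreover have "L_words n c e S k \<subseteq> lin_span ?W"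
    unfolding L_words_def by (rule cvec.span_mono[folded lin_span_eq_span]) blast
  ultimately show ?thesis
    using assms by (auto simp: generating_set_def)
qed

lemma set_length_le:
  assumes gen: "generating_set n c e S" and e: "e \<in> vecs n"
    and words: "\<And>w k. is_word (sc_mult n c) e S w k \<Longrightarrow> w \<in> L_words n c e S m"
  shows "set_length n c e S \<le> m"
proof -
  have S: "S \<subseteq> vecs n" and span: "lin_span {w. \<exists>k. is_word (sc_mult n c) e S w k} = vecs n"
    using gen by (auto simp: generating_set_def)
  have "vecs n \<subseteq> L_words n c e S m"
    unfolding span[symmetric] lin_span_eq_span
    by (rule cvec.span_minimal) (use words in \<open>auto simp: L_words_eq_span\<close>)
  then have "L_words n c e S m = vecs n"
    using L_words_subset_vecs[OF e S] by blast
  then show ?thesis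
    unfolding set_length_def by (rule Least_le)
qed

lemma set_length_eqI:
  assumes "L_words n c e S m = vecs n" and "L_words n c e S (m - 1) \<noteq> vecs n"
  shows "set_length n c e S = m"
  unfolding set_length_def
proof (rule Least_equality)
  fix k assume k: "L_words n c e S k = vecs n"
  show "m \<le> k"
  proof (rule ccontr)
    assume "\<not> m \<le> k"
    then have "L_words n c e S k \<subseteq> L_words n c e S (m - 1)" "L_words n c e S (m - 1) \<subseteq> L_words n c e S m"
      by (simp_all add: L_words_mono)
    then show False using k assms by blast
  qed
qed (fact assms(1))

definition chain_alg :: "nat \<Rightarrow> nat \<Rightarrow> nat \<Rightarrow> nat \<Rightarrow> nat \<Rightarrow> 'a::field" where
  "chain_alg p q i j k =
     of_bool (i = 0 \<and> j = k) + of_bool (i = k \<and> j = 0 \<and> k \<noteq> 0)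
     + of_bool (i = k - 1 \<and> j = k - 1 \<and> 2 \<le> k \<and> k \<le> p + 1)
     + of_bool (i = q + 1 \<and> j = p + 1 \<and> k = p + 2)"

lemma sc_mult_chain_alg:
  assumes "k < n" and "p + 2 < n" and "q \<le> p"
  shows "sc_mult n (chain_alg p q) x y k =
    x 0 * y k + (if k \<noteq> 0 then x k * y 0 else 0)
    + (if 2 \<le> k \<and> k \<le> p + 1 then x (k - 1) * y (k - 1) else 0)
    + (if k = p + 2 then x (q + 1) * y (p + 1) else 0)"
  using assms less_imp_diff_less[OF assms(1)]
  by (simp add: sc_mult_def chain_alg_def distrib_right sum.distrib
      sum_sum_delta sum_sum_delta[where R = True, simplified])

lemma is_unit_chain_alg:
  assumes "p + 2 < n" and "q \<le> p"
  shows "is_unit n (chain_alg p q) (basis_vec 0 :: nat \<Rightarrow> 'a::field)"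
  unfolding is_unit_def
proof (intro conjI ballI)
  show "basis_vec 0 \<in> (vecs n :: (nat \<Rightarrow> 'a) set)"
    using assms by (simp add: basis_vec_in_vecs)
  fix x :: "nat \<Rightarrow> 'a" assume x: "x \<in> vecs n"
  have "sc_mult n (chain_alg p q) (basis_vec 0) x k = x k \<and> sc_mult n (chain_alg p q) x (basis_vec 0) k = x k"
    for k
    using x assms
    by (cases "k < n") (auto simp: sc_mult_chain_alg basis_vec_def vecs_def sc_mult_eq_0_outside)
  then show "sc_mult n (chain_alg p q) (basis_vec 0) x = x" "sc_mult n (chain_alg p q) x (basis_vec 0) = x"
    by (simp_all add: fun_eq_iff)
qed

lemma basis_vec_mult_chain_alg:
  assumes "p + 2 < n" and "q \<le> p" and "1 \<le> s" "s < n" and "1 \<le> t" "t < n"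
  shows "sc_mult n (chain_alg p q) (basis_vec s) (basis_vec t) =
    (if s = t \<and> s \<le> p then basis_vec (s + 1)
     else if s = q + 1 \<and> t = p + 1 then basis_vec (p + 2) else 0 :: nat \<Rightarrow> 'a::field)"
proof
  fix k
  show "sc_mult n (chain_alg p q) (basis_vec s) (basis_vec t) k =
    (if s = t \<and> s \<le> p then basis_vec (s + 1)
     else if s = q + 1 \<and> t = p + 1 then basis_vec (p + 2) else 0 :: nat \<Rightarrow> 'a) k"
    using assms by (cases "k < n") (auto simp: sc_mult_chain_alg basis_vec_def sc_mult_eq_0_outside)
qed

definition chain_weight :: "nat \<Rightarrow> nat \<Rightarrow> nat \<Rightarrow> nat" where
  "chain_weight p q t =
     (if t = 0 then 0 else if t \<le> p + 1 then 2 ^ (t - 1) else if t = p + 2 then 2 ^ p + 2 ^ q else 1)"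

lemma chain_weight_eq_0_iff: "chain_weight p q t = 0 \<longleftrightarrow> t = 0"
  by (simp add: chain_weight_def)

lemma chain_weight_le: "q \<le> p \<Longrightarrow> chain_weight p q t \<le> 2 ^ p + 2 ^ q"
  by (auto simp: chain_weight_def intro: trans_le_add1 power_increasing)

lemma basis_vec_mult_chain_alg_weight:
  assumes pn: "p + 2 < n" and qp: "q \<le> p" and s: "1 \<le> s" "s < n" and t: "1 \<le> t" "t < n"
  shows "sc_mult n (chain_alg p q) (basis_vec s) (basis_vec t) = (0 :: nat \<Rightarrow> 'a::field) \<or>
    (\<exists>r<n. sc_mult n (chain_alg p q) (basis_vec s) (basis_vec t) = (basis_vec r :: nat \<Rightarrow> 'a) \<and>
      chain_weight p q s + chain_weight p q t = chain_weight p q r)"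
proof -
  note st = basis_vec_mult_chain_alg[OF pn qp s t, where 'a = 'a]
  consider "s = t" "s \<le> p" | "s = q + 1" "t = p + 1" "\<not> (s = t \<and> s \<le> p)"
    | "\<not> (s = t \<and> s \<le> p)" "\<not> (s = q + 1 \<and> t = p + 1)"
    by blast
  then show ?thesis
  proof cases
    case 1
    then have "chain_weight p q s + chain_weight p q t = chain_weight p q (s + 1)"
      using s by (simp add: chain_weight_def flip: mult_2 power_Suc)
    then show ?thesis
      using 1 st pn by (intro disjI2 exI[of _ "s + 1"]) simp
  next
    case 2
    then have "chain_weight p q s + chain_weight p q t = chain_weight p q (p + 2)"
      using qp by (simp add: chain_weight_def)
    moreover have "sc_mult n (chain_alg p q) (basis_vec s) (basis_vec t) = (basis_vec (p + 2) :: nat \<Rightarrow> 'a)"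
      using st 2 by (auto split: if_splits)
    ultimately show ?thesis
      using pn by (intro disjI2 exI[of _ "p + 2"]) simp
  next
    case 3
    then show ?thesis
      using st[unfolded if_not_P[OF 3(1)] if_not_P[OF 3(2)]] by simp
  qed
qed

lemma chain_word_coord_eq_0:
  assumes pn: "p + 2 < n" and qp: "q \<le> p" and S0: "\<forall>s\<in>S. s 0 = 0"
    and w: "is_word (sc_mult n (chain_alg p q)) (basis_vec 0) S w k"
  shows "chain_weight p q t < k \<Longrightarrow> w t = 0"
  using w
proof (induction arbitrary: t)
  case word_one
  then show ?case by simp
next
  case (word_gen s)
  then have "t = 0"
    using chain_weight_eq_0_iff[of p q t] by simp
  then show ?case using S0 word_gen by simp
next
  case (word_mult a i b j)
  have "a 0 = 0" "b 0 = 0"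
    using word_mult by (auto simp: chain_weight_def)
  moreover have "a (t - 1) = 0 \<or> b (t - 1) = 0" if "2 \<le> t" "t \<le> p + 1"
  proof -
    have "chain_weight p q t = 2 * chain_weight p q (t - 1)"
      using that by (auto simp: chain_weight_def simp flip: power_Suc)
    then have "chain_weight p q (t - 1) < i \<or> chain_weight p q (t - 1) < j"
      using word_mult.prems by linarith
    then show ?thesis using word_mult.IH by blast
  qed
  moreover have "a (q + 1) = 0 \<or> b (p + 1) = 0" if "t = p + 2"
  proof -
    have "chain_weight p q t = chain_weight p q (q + 1) + chain_weight p q (p + 1)"
      using that qp by (simp add: chain_weight_def)
    then have "chain_weight p q (q + 1) < i \<or> chain_weight p q (p + 1) < j"
      using word_mult.prems by linarith
    then show ?thesis using word_mult.IH by blast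
  qed
  ultimately show ?case
    using pn qp by (cases "t < n") (auto simp: sc_mult_chain_alg sc_mult_eq_0_outside)
qed

lemma chain_long_word_eq_0:
  assumes "p + 2 < n" and "q \<le> p" and "\<forall>s\<in>S. s 0 = 0"
    and "is_word (sc_mult n (chain_alg p q)) (basis_vec 0) S w k" and "2 ^ p + 2 ^ q < k"
  shows "w = 0"
proof
  fix t
  have "chain_weight p q t < k"
    using chain_weight_le[OF assms(2)] assms(5) by (rule le_less_trans)
  then show "w t = 0 t"
    using chain_word_coord_eq_0[OF assms(1-4)] by simp
qed

definition chain_gens :: "nat \<Rightarrow> nat \<Rightarrow> (nat \<Rightarrow> 'a::field) set" where
  "chain_gens n p = insert (basis_vec 1) (basis_vec ` {p + 3..<n})"

lemma chain_gens_word_cases: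
  assumes pn: "p + 2 < n" and qp: "q \<le> p"
    and w: "is_word (sc_mult n (chain_alg p q)) (basis_vec 0 :: nat \<Rightarrow> 'a::field) (chain_gens n p) w k"
  shows "w = 0 \<or> (\<exists>t<n. w = basis_vec t \<and> k = chain_weight p q t)"
  using w
proof induction
  case word_one
  show ?case
    using pn chain_weight_eq_0_iff[of p q 0] by (intro disjI2 exI[of _ 0]) simp
next
  case (word_gen s)
  then obtain t where "t = 1 \<or> t \<in> {p + 3..<n}" and "s = basis_vec t"
    unfolding chain_gens_def by blast
  moreover from this(1) have "t < n" "chain_weight p q t = 1"
    using pn by (auto simp: chain_weight_def)
  ultimately show ?case by auto
next
  case (word_mult a i b j)
  show ?case
  proof (cases "a = 0 \<or> b = 0")
    case True
    then show ?thesis by (auto simp: sc_mult_linear_left sc_mult_linear_right)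
  next
    case False
    then obtain s t where s: "s < n" "a = basis_vec s" "i = chain_weight p q s"
      and t: "t < n" "b = basis_vec t" "j = chain_weight p q t"
      using word_mult.IH by blast
    have "s \<noteq> 0" "t \<noteq> 0"
      using s(3) t(3) word_mult.hyps(3,4) chain_weight_eq_0_iff[of p q] by (metis not_one_le_zero)+
    then have "1 \<le> s" "1 \<le> t"
      by simp_all
    from pn qp \<open>1 \<le> s\<close> s(1) \<open>1 \<le> t\<close> t(1) show ?thesis
      unfolding s(2,3) t(2,3) by (rule basis_vec_mult_chain_alg_weight)
  qed
qed

lemma basis_vec_is_chain_word:
  assumes pn: "p + 2 < n" and qp: "q \<le> p" and t: "t < n"
  shows "is_word (sc_mult n (chain_alg p q)) (basis_vec 0 :: nat \<Rightarrow> 'a::field) (chain_gens n p)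
    (basis_vec t) (chain_weight p q t)"
proof -
  let ?word = "is_word (sc_mult n (chain_alg p q)) (basis_vec 0 :: nat \<Rightarrow> 'a) (chain_gens n p)"
  have square: "?word (basis_vec t) (2 ^ (t - 1))" if "1 \<le> t" "t \<le> p + 1" for t
    using that
  proof (induction t rule: nat_induct_at_least)
    case base
    show ?case using is_word.word_gen[of "basis_vec 1" "chain_gens n p"] by (simp add: chain_gens_def)
  next
    case (Suc t)
    then have "?word (sc_mult n (chain_alg p q) (basis_vec t) (basis_vec t)) (2 ^ (t - 1) + 2 ^ (t - 1))"
      by (intro is_word.word_mult) auto
    then show ?case
      using Suc pn qp by (simp add: basis_vec_mult_chain_alg flip: mult_2 power_Suc)
  qed
  consider "t = 0" | "1 \<le> t" "t \<le> p + 1" | "t = p + 2" | "p + 3 \<le> t" by linarith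
  then show ?thesis
  proof cases
    case 1
    then show ?thesis by (simp add: chain_weight_def is_word.word_one)
  next
    case 2
    then show ?thesis using square by (simp add: chain_weight_def)
  next
    case 3
    have "?word (basis_vec (q + 1)) (2 ^ q)" "?word (basis_vec (p + 1)) (2 ^ p)"
      using square[of "q + 1"] square[of "p + 1"] qp by simp_all
    then have "?word (sc_mult n (chain_alg p q) (basis_vec (q + 1)) (basis_vec (p + 1))) (2 ^ q + 2 ^ p)"
      by (intro is_word.word_mult) auto
    moreover have "sc_mult n (chain_alg p q) (basis_vec (q + 1)) (basis_vec (p + 1)) =
        (basis_vec (p + 2) :: nat \<Rightarrow> 'a)"
      using pn qp by (simp add: basis_vec_mult_chain_alg)
    ultimately show ?thesis
      using 3 by (simp add: chain_weight_def add.commute)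
  next
    case 4
    then show ?thesis
      using t is_word.word_gen[of "basis_vec t" "chain_gens n p"] by (simp add: chain_gens_def chain_weight_def)
  qed
qed

lemma chain_gens_set_length:
  assumes pn: "p + 2 < n" and qp: "q \<le> p"
  shows "generating_set n (chain_alg p q) (basis_vec 0 :: nat \<Rightarrow> 'a::field) (chain_gens n p)"
    and "set_length n (chain_alg p q) (basis_vec 0 :: nat \<Rightarrow> 'a) (chain_gens n p) = 2 ^ p + 2 ^ q"
proof -
  let ?L = "L_words n (chain_alg p q) (basis_vec 0 :: nat \<Rightarrow> 'a) (chain_gens n p)"
  let ?m = "2 ^ p + 2 ^ q :: nat"
  have e: "basis_vec 0 \<in> vecs n" and S: "chain_gens n p \<subseteq> vecs n"
    using pn by (auto simp: chain_gens_def basis_vec_in_vecs)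
  have "basis_vec t \<in> ?L ?m" if "t < n" for t
    using basis_vec_is_chain_word[OF pn qp that] chain_weight_le[OF qp] by (rule is_word_in_L_words)
  then have "vecs n \<subseteq> ?L ?m"
    unfolding vecs_eq_span_basis_vec by (intro cvec.span_minimal) (auto simp: L_words_eq_span)
  then have L_m: "?L ?m = vecs n"
    using L_words_subset_vecs[OF e S] by blast
  then show "generating_set n (chain_alg p q) (basis_vec 0 :: nat \<Rightarrow> 'a) (chain_gens n p)"
    using e S by (intro generating_setI) (auto simp: chain_gens_def)
  have "?L (?m - 1) \<subseteq> {x. x (p + 2) = 0}"
    unfolding L_words_eq_span
  proof (intro cvec.span_minimal)
    show "cvec.subspace {x :: nat \<Rightarrow> 'a. x (p + 2) = 0}"
      by (simp add: cvec.subspace_def)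
    show "{w. \<exists>k\<le>?m - 1. is_word (sc_mult n (chain_alg p q)) (basis_vec 0) (chain_gens n p) w k}
      \<subseteq> {x. x (p + 2) = 0}"
    proof clarify
      fix w k
      assume k: "k \<le> ?m - 1" and w: "is_word (sc_mult n (chain_alg p q)) (basis_vec 0) (chain_gens n p) w k"
      have "0 < ?m"
        by simp
      with k have "k < ?m"
        by linarith
      then have "k \<noteq> chain_weight p q (p + 2)"
        by (simp add: chain_weight_def)
      with chain_gens_word_cases[OF pn qp w] show "w (p + 2) = 0"
        by (auto simp: basis_vec_def)
    qed
  qed
  moreover have "basis_vec (p + 2) \<in> vecs n"
    using pn by (simp add: basis_vec_in_vecs)
  moreover have "basis_vec (p + 2) (p + 2) \<noteq> (0 :: 'a)"
    by (simp add: basis_vec_def)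
  ultimately have "?L (?m - 1) \<noteq> vecs n"
    by blast
  with L_m show "set_length n (chain_alg p q) (basis_vec 0 :: nat \<Rightarrow> 'a) (chain_gens n p) = ?m"
    by (rule set_length_eqI)
qed

lemma chain_set_length_le:
  assumes pn: "p + 2 < n" and qp: "q \<le> p"
    and gen: "generating_set n (chain_alg p q) (basis_vec 0 :: nat \<Rightarrow> 'a::field) S"
  shows "set_length n (chain_alg p q) (basis_vec 0) S \<le> 2 ^ p + 2 ^ q"
proof -
  let ?c = "chain_alg p q :: nat \<Rightarrow> nat \<Rightarrow> nat \<Rightarrow> 'a" and ?e = "basis_vec 0 :: nat \<Rightarrow> 'a"
  let ?m = "2 ^ p + 2 ^ q :: nat"
  define S' where "S' = (\<lambda>s. s - (\<lambda>k. s 0 * ?e k)) ` S"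
  have unit: "is_unit n ?c ?e"
    by (rule is_unit_chain_alg[OF pn qp])
  then have e: "?e \<in> vecs n"
    by (simp add: is_unit_def)
  have S: "S \<subseteq> vecs n"
    using gen by (simp add: generating_set_def)
  then have S': "S' \<subseteq> vecs n"
    using e by (auto simp: S'_def vecs_def)
  have "L_words n ?c ?e S' k = L_words n ?c ?e S k" for k
  proof (rule antisym; rule L_words_unit_shift[OF unit])
    fix t assume "t \<in> S'"
    then obtain s where "s \<in> S" and "t = s + (\<lambda>k. (- s 0) * ?e k)"
      by (auto simp: S'_def fun_eq_iff)
    then show "\<exists>s\<in>S. \<exists>\<alpha>. t = s + (\<lambda>k. \<alpha> * ?e k)"
      by blast
  next
    fix s assume "s \<in> S"
    then have "s - (\<lambda>k. s 0 * ?e k) \<in> S'" and "s = (s - (\<lambda>k. s 0 * ?e k)) + (\<lambda>k. s 0 * ?e k)"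
      by (simp_all add: S'_def)
    then show "\<exists>t\<in>S'. \<exists>\<alpha>. s = t + (\<lambda>k. \<alpha> * ?e k)"
      by blast
  qed (fact S S')+
  moreover have "\<forall>s\<in>S'. s 0 = 0"
    by (simp add: S'_def basis_vec_def)
  then have "L_words n ?c ?e S' k \<subseteq> L_words n ?c ?e S' ?m" for k
    using chain_long_word_eq_0[OF pn qp] by (intro L_words_subset_if_long_words_vanish) blast
  ultimately have "w \<in> L_words n ?c ?e S ?m" if "is_word (sc_mult n ?c) ?e S w k" for w k
    using is_word_in_L_words[OF that order_refl] by blast
  with gen e show ?thesis
    by (rule set_length_le)
qed

theorem proposition4p4:
  fixes n p q :: nat
  assumes "n > 4" and "2 \<le> p" and "p \<le> n - 3" and "q \<le> p"
  shows "\<exists>(c :: nat \<Rightarrow> nat \<Rightarrow> nat \<Rightarrow> 'a::field) e.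
           is_unit n c e \<and> algebra_length_is n c e (2 ^ p + 2 ^ q)"
proof -
  have pn: "p + 2 < n" and qp: "q \<le> p"
    using assms by linarith+
  have "algebra_length_is n (chain_alg p q) (basis_vec 0 :: nat \<Rightarrow> 'a) (2 ^ p + 2 ^ q)"
    unfolding algebra_length_is_def
    using chain_gens_set_length[OF pn qp] chain_set_length_le[OF pn qp] by blast
  with is_unit_chain_alg[OF pn qp] show ?thesis
    by blast
qed

end
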